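(* Let $\mathcal{K}$ be a 2-category and $\mathcal{H}$ a class of 1-cells of $\mathcal{K}$ each of which is a corepresentable surjection. If $X,Y$ are right Kan injective with respect to all maps in $\mathcal{H}$, then every 1-cell $g:X\to Y$ preserves right Kan extensions along all maps in $\mathcal{H}$; and similarly, if $X,Y$ are left Kan injective with respect to all maps in $\mathcal{H}$, every 1-cell $X\to Y$ preserves left Kan extensions along maps in $\mathcal{H}$. Hence $\mathsf{LInj}(\mathcal{H})$ and $\mathsf{RInj}(\mathcal{H})$ are full sub-2-categories of $\mathcal{K}$.
   Context: A 1-cell $f:A\to B$ is a corepresentable surjection if for every object $X$ the functor $-\circ f:\mathcal{K}(B,X)\to\mathcal{K}(A,X)$ is conservative. $X$ is right Kan injective w.r.t. $f:A\to B$ if for every $x:A\to X$ a right Kan extension $\mathsf{ran}_fx$ exists (a 1-cell $B\to X$ with universal 2-cell $\epsilon:\mathsf{ran}_fx\circ f\Rightarrow x$) and $\epsilon$ is invertible; left Kan injectivity is the dual notion (with left Kan extensions and invertible units). A 1-cell $h$ preserves $\mathsf{ran}_fx$ if $(h\circ\mathsf{ran}_fx,h\epsilon)$ is a right Kan extension of $hx$ along $f$. $\mathsf{RInj}(\mathcal{H})$ (resp. $\mathsf{LInj}(\mathcal{H})$) is the locally full sub-2-category of objects right (resp. left) Kan injective w.r.t. all maps in $\mathcal{H}$ and 1-cells preserving these right (resp. left) Kan extensions. *)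

theory Defs
  imports Main
begin

text \<open>A (strict) 2-category, presented as a record of data subject to the axioms
  of the locale two_category.  1-cells compose as comp1 g f = g after f; 2-cells compose
  vertically as vcomp beta alpha = beta after alpha, and horizontally as
  hcomp beta alpha : comp1 g f => comp1 g' f' for alpha : f => f' and beta : g => g'.\<close>

record ('o, 'a, 'c) two_cat =
  obj   :: "'o set"
  arr   :: "'a set"
  dom1  :: "'a \<Rightarrow> 'o"
  cod1  :: "'a \<Rightarrow> 'o"
  id1   :: "'o \<Rightarrow> 'a"
  comp1 :: "'a \<Rightarrow> 'a \<Rightarrow> 'a"
  cell  :: "'c set"
  src2  :: "'c \<Rightarrow> 'a"
  tgt2  :: "'c \<Rightarrow> 'a"
  id2   :: "'a \<Rightarrow> 'c"
  vcomp :: "'c \<Rightarrow> 'c \<Rightarrow> 'c"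
  hcomp :: "'c \<Rightarrow> 'c \<Rightarrow> 'c"

definition hom1 :: "('o, 'a, 'c, 'z) two_cat_scheme \<Rightarrow> 'o \<Rightarrow> 'o \<Rightarrow> 'a set" where
  "hom1 K A B = {f \<in> arr K. dom1 K f = A \<and> cod1 K f = B}"

definition hom2 :: "('o, 'a, 'c, 'z) two_cat_scheme \<Rightarrow> 'a \<Rightarrow> 'a \<Rightarrow> 'c set" where
  "hom2 K f g = {\<alpha> \<in> cell K. src2 K \<alpha> = f \<and> tgt2 K \<alpha> = g}"

locale two_category =
  fixes K :: "('o, 'a, 'c, 'z) two_cat_scheme"
  assumes arr_obj: "f \<in> arr K \<Longrightarrow> dom1 K f \<in> obj K \<and> cod1 K f \<in> obj K"
    and id1_hom: "A \<in> obj K \<Longrightarrow> id1 K A \<in> hom1 K A A"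
    and comp1_hom: "f \<in> hom1 K A B \<Longrightarrow> g \<in> hom1 K B C \<Longrightarrow> comp1 K g f \<in> hom1 K A C"
    and comp1_assoc: "f \<in> hom1 K A B \<Longrightarrow> g \<in> hom1 K B C \<Longrightarrow> h \<in> hom1 K C D \<Longrightarrow>
        comp1 K h (comp1 K g f) = comp1 K (comp1 K h g) f"
    and comp1_id_left: "f \<in> hom1 K A B \<Longrightarrow> comp1 K (id1 K B) f = f"
    and comp1_id_right: "f \<in> hom1 K A B \<Longrightarrow> comp1 K f (id1 K A) = f"
    and cell_arr: "\<alpha> \<in> cell K \<Longrightarrow> \<exists>A B. src2 K \<alpha> \<in> hom1 K A B \<and> tgt2 K \<alpha> \<in> hom1 K A B"
    and id2_hom: "f \<in> arr K \<Longrightarrow> id2 K f \<in> hom2 K f f"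
    and vcomp_hom: "\<alpha> \<in> hom2 K f g \<Longrightarrow> \<beta> \<in> hom2 K g h \<Longrightarrow> vcomp K \<beta> \<alpha> \<in> hom2 K f h"
    and vcomp_assoc: "\<alpha> \<in> hom2 K f g \<Longrightarrow> \<beta> \<in> hom2 K g h \<Longrightarrow> \<gamma> \<in> hom2 K h k \<Longrightarrow>
        vcomp K \<gamma> (vcomp K \<beta> \<alpha>) = vcomp K (vcomp K \<gamma> \<beta>) \<alpha>"
    and vcomp_id_left: "\<alpha> \<in> hom2 K f g \<Longrightarrow> vcomp K (id2 K g) \<alpha> = \<alpha>"
    and vcomp_id_right: "\<alpha> \<in> hom2 K f g \<Longrightarrow> vcomp K \<alpha> (id2 K f) = \<alpha>"
    and hcomp_hom: "f \<in> hom1 K A B \<Longrightarrow> f' \<in> hom1 K A B \<Longrightarrow> g \<in> hom1 K B C \<Longrightarrow> g' \<in> hom1 K B C \<Longrightarrow>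
        \<alpha> \<in> hom2 K f f' \<Longrightarrow> \<beta> \<in> hom2 K g g' \<Longrightarrow>
        hcomp K \<beta> \<alpha> \<in> hom2 K (comp1 K g f) (comp1 K g' f')"
    and hcomp_assoc: "f \<in> hom1 K A B \<Longrightarrow> f' \<in> hom1 K A B \<Longrightarrow> g \<in> hom1 K B C \<Longrightarrow> g' \<in> hom1 K B C \<Longrightarrow>
        h \<in> hom1 K C D \<Longrightarrow> h' \<in> hom1 K C D \<Longrightarrow>
        \<alpha> \<in> hom2 K f f' \<Longrightarrow> \<beta> \<in> hom2 K g g' \<Longrightarrow> \<gamma> \<in> hom2 K h h' \<Longrightarrow>
        hcomp K \<gamma> (hcomp K \<beta> \<alpha>) = hcomp K (hcomp K \<gamma> \<beta>) \<alpha>"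
    and hcomp_id2: "f \<in> hom1 K A B \<Longrightarrow> g \<in> hom1 K B C \<Longrightarrow>
        hcomp K (id2 K g) (id2 K f) = id2 K (comp1 K g f)"
    and hcomp_unit_left: "f \<in> hom1 K A B \<Longrightarrow> f' \<in> hom1 K A B \<Longrightarrow> \<alpha> \<in> hom2 K f f' \<Longrightarrow>
        hcomp K (id2 K (id1 K B)) \<alpha> = \<alpha>"
    and hcomp_unit_right: "f \<in> hom1 K A B \<Longrightarrow> f' \<in> hom1 K A B \<Longrightarrow> \<alpha> \<in> hom2 K f f' \<Longrightarrow>
        hcomp K \<alpha> (id2 K (id1 K A)) = \<alpha>"
    and interchange: "f \<in> hom1 K A B \<Longrightarrow> f' \<in> hom1 K A B \<Longrightarrow> f'' \<in> hom1 K A B \<Longrightarrow>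
        g \<in> hom1 K B C \<Longrightarrow> g' \<in> hom1 K B C \<Longrightarrow> g'' \<in> hom1 K B C \<Longrightarrow>
        \<alpha> \<in> hom2 K f f' \<Longrightarrow> \<alpha>' \<in> hom2 K f' f'' \<Longrightarrow> \<beta> \<in> hom2 K g g' \<Longrightarrow> \<beta>' \<in> hom2 K g' g'' \<Longrightarrow>
        hcomp K (vcomp K \<beta>' \<beta>) (vcomp K \<alpha>' \<alpha>) = vcomp K (hcomp K \<beta>' \<alpha>') (hcomp K \<beta> \<alpha>)"

definition whiskerL :: "('o, 'a, 'c, 'z) two_cat_scheme \<Rightarrow> 'a \<Rightarrow> 'c \<Rightarrow> 'c" where
  "whiskerL K h \<alpha> = hcomp K (id2 K h) \<alpha>"

definition whiskerR :: "('o, 'a, 'c, 'z) two_cat_scheme \<Rightarrow> 'c \<Rightarrow> 'a \<Rightarrow> 'c" where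
  "whiskerR K \<alpha> f = hcomp K \<alpha> (id2 K f)"

definition invertible2 :: "('o, 'a, 'c, 'z) two_cat_scheme \<Rightarrow> 'c \<Rightarrow> bool" where
  "invertible2 K \<alpha> \<longleftrightarrow> \<alpha> \<in> cell K \<and>
     (\<exists>\<beta> \<in> hom2 K (tgt2 K \<alpha>) (src2 K \<alpha>).
        vcomp K \<beta> \<alpha> = id2 K (src2 K \<alpha>) \<and> vcomp K \<alpha> \<beta> = id2 K (tgt2 K \<alpha>))"

definition corep_surj :: "('o, 'a, 'c, 'z) two_cat_scheme \<Rightarrow> 'a \<Rightarrow> bool" where
  "corep_surj K f \<longleftrightarrow> f \<in> arr K \<and>
     (\<forall>X \<in> obj K. \<forall>g \<in> hom1 K (cod1 K f) X. \<forall>g' \<in> hom1 K (cod1 K f) X.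
        \<forall>\<alpha> \<in> hom2 K g g'. invertible2 K (whiskerR K \<alpha> f) \<longrightarrow> invertible2 K \<alpha>)"

definition is_ran :: "('o, 'a, 'c, 'z) two_cat_scheme \<Rightarrow> 'a \<Rightarrow> 'a \<Rightarrow> 'a \<Rightarrow> 'c \<Rightarrow> bool" where
  "is_ran K f x r \<epsilon> \<longleftrightarrow> f \<in> arr K \<and> x \<in> arr K \<and> dom1 K x = dom1 K f \<and>
     r \<in> hom1 K (cod1 K f) (cod1 K x) \<and> \<epsilon> \<in> hom2 K (comp1 K r f) x \<and>
     (\<forall>s \<in> hom1 K (cod1 K f) (cod1 K x). \<forall>\<alpha> \<in> hom2 K (comp1 K s f) x.
        \<exists>!\<beta>. \<beta> \<in> hom2 K s r \<and> vcomp K \<epsilon> (whiskerR K \<beta> f) = \<alpha>)"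

definition is_lan :: "('o, 'a, 'c, 'z) two_cat_scheme \<Rightarrow> 'a \<Rightarrow> 'a \<Rightarrow> 'a \<Rightarrow> 'c \<Rightarrow> bool" where
  "is_lan K f x l \<eta> \<longleftrightarrow> f \<in> arr K \<and> x \<in> arr K \<and> dom1 K x = dom1 K f \<and>
     l \<in> hom1 K (cod1 K f) (cod1 K x) \<and> \<eta> \<in> hom2 K x (comp1 K l f) \<and>
     (\<forall>s \<in> hom1 K (cod1 K f) (cod1 K x). \<forall>\<alpha> \<in> hom2 K x (comp1 K s f).
        \<exists>!\<beta>. \<beta> \<in> hom2 K l s \<and> vcomp K (whiskerR K \<beta> f) \<eta> = \<alpha>)"

definition right_Kan_injective :: "('o, 'a, 'c, 'z) two_cat_scheme \<Rightarrow> 'o \<Rightarrow> 'a \<Rightarrow> bool" where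
  "right_Kan_injective K X f \<longleftrightarrow>
     (\<forall>x \<in> hom1 K (dom1 K f) X. \<exists>r \<epsilon>. is_ran K f x r \<epsilon> \<and> invertible2 K \<epsilon>)"

definition left_Kan_injective :: "('o, 'a, 'c, 'z) two_cat_scheme \<Rightarrow> 'o \<Rightarrow> 'a \<Rightarrow> bool" where
  "left_Kan_injective K X f \<longleftrightarrow>
     (\<forall>x \<in> hom1 K (dom1 K f) X. \<exists>l \<eta>. is_lan K f x l \<eta> \<and> invertible2 K \<eta>)"

definition preserves_ran :: "('o, 'a, 'c, 'z) two_cat_scheme \<Rightarrow> 'a \<Rightarrow> 'a \<Rightarrow> 'a \<Rightarrow> 'a \<Rightarrow> 'c \<Rightarrow> bool" where
  "preserves_ran K h f x r \<epsilon> \<longleftrightarrow> is_ran K f (comp1 K h x) (comp1 K h r) (whiskerL K h \<epsilon>)"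

definition preserves_lan :: "('o, 'a, 'c, 'z) two_cat_scheme \<Rightarrow> 'a \<Rightarrow> 'a \<Rightarrow> 'a \<Rightarrow> 'a \<Rightarrow> 'c \<Rightarrow> bool" where
  "preserves_lan K h f x l \<eta> \<longleftrightarrow> is_lan K f (comp1 K h x) (comp1 K h l) (whiskerL K h \<eta>)"

definition RInj_obj :: "('o, 'a, 'c, 'z) two_cat_scheme \<Rightarrow> 'a set \<Rightarrow> 'o \<Rightarrow> bool" where
  "RInj_obj K H X \<longleftrightarrow> X \<in> obj K \<and> (\<forall>f \<in> H. right_Kan_injective K X f)"

definition LInj_obj :: "('o, 'a, 'c, 'z) two_cat_scheme \<Rightarrow> 'a set \<Rightarrow> 'o \<Rightarrow> bool" where
  "LInj_obj K H X \<longleftrightarrow> X \<in> obj K \<and> (\<forall>f \<in> H. left_Kan_injective K X f)"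

definition RInj_arr :: "('o, 'a, 'c, 'z) two_cat_scheme \<Rightarrow> 'a set \<Rightarrow> 'a \<Rightarrow> bool" where
  "RInj_arr K H h \<longleftrightarrow> h \<in> arr K \<and>
     (\<forall>f \<in> H. \<forall>x r \<epsilon>. is_ran K f x r \<epsilon> \<and> cod1 K x = dom1 K h \<longrightarrow> preserves_ran K h f x r \<epsilon>)"

definition LInj_arr :: "('o, 'a, 'c, 'z) two_cat_scheme \<Rightarrow> 'a set \<Rightarrow> 'a \<Rightarrow> bool" where
  "LInj_arr K H h \<longleftrightarrow> h \<in> arr K \<and>
     (\<forall>f \<in> H. \<forall>x l \<eta>. is_lan K f x l \<eta> \<and> cod1 K x = dom1 K h \<longrightarrow> preserves_lan K h f x l \<eta>)"

end

theory Submission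
  imports Defs
begin

text \<open>Let \<open>f \<in> H\<close>, let \<open>(r, \<epsilon>)\<close> be a right Kan extension of \<open>x : A \<rightarrow> X\<close> along \<open>f\<close>
  and \<open>g : X \<rightarrow> Y\<close>. Right Kan extensions are unique up to isomorphism, so since \<open>X\<close> is
  right Kan injective \<open>\<epsilon>\<close> is invertible. Since \<open>Y\<close> is right Kan injective, \<open>g x\<close> has a
  right Kan extension \<open>(s, \<delta>)\<close> with \<open>\<delta>\<close> invertible, and \<open>g \<epsilon> = \<delta> \<cdot> \<beta> f\<close> for a unique
  \<open>\<beta> : g r \<Rightarrow> s\<close>. Then \<open>\<beta> f\<close> is invertible, hence so is \<open>\<beta>\<close> because \<open>f\<close> is a
  corepresentable surjection, and transporting \<open>(s, \<delta>)\<close> along \<open>\<beta>\<close> shows that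
  \<open>(g r, g \<epsilon>)\<close> is a right Kan extension. The left case is the right case in \<open>K\<^sup>c\<^sup>o\<close>.\<close>

context two_category
begin

lemma id2_hom1: "f \<in> hom1 K A B \<Longrightarrow> id2 K f \<in> hom2 K f f"
  by (rule id2_hom) (simp add: hom1_def)

lemma whiskerR_hom:
  "f \<in> hom1 K A B \<Longrightarrow> g \<in> hom1 K B C \<Longrightarrow> g' \<in> hom1 K B C \<Longrightarrow> \<alpha> \<in> hom2 K g g' \<Longrightarrow>
   whiskerR K \<alpha> f \<in> hom2 K (comp1 K g f) (comp1 K g' f)"
  unfolding whiskerR_def by (rule hcomp_hom) (auto intro: id2_hom1)

lemma whiskerL_hom:
  "h \<in> hom1 K B C \<Longrightarrow> f \<in> hom1 K A B \<Longrightarrow> f' \<in> hom1 K A B \<Longrightarrow> \<alpha> \<in> hom2 K f f' \<Longrightarrow>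
   whiskerL K h \<alpha> \<in> hom2 K (comp1 K h f) (comp1 K h f')"
  unfolding whiskerL_def by (rule hcomp_hom) (auto intro: id2_hom1)

lemma whiskerR_vcomp:
  assumes f: "f \<in> hom1 K A B"
    and g: "g \<in> hom1 K B C" "g' \<in> hom1 K B C" "g'' \<in> hom1 K B C"
    and \<alpha>: "\<alpha> \<in> hom2 K g g'" and \<beta>: "\<beta> \<in> hom2 K g' g''"
  shows "whiskerR K (vcomp K \<beta> \<alpha>) f = vcomp K (whiskerR K \<beta> f) (whiskerR K \<alpha> f)"
proof -
  have i: "id2 K f \<in> hom2 K f f" using f by (rule id2_hom1)
  have "whiskerR K (vcomp K \<beta> \<alpha>) f = hcomp K (vcomp K \<beta> \<alpha>) (vcomp K (id2 K f) (id2 K f))"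
    unfolding whiskerR_def using vcomp_id_left[OF i] by simp
  also have "\<dots> = vcomp K (whiskerR K \<beta> f) (whiskerR K \<alpha> f)"
    unfolding whiskerR_def by (rule interchange[OF f f f g i i \<alpha> \<beta>])
  finally show ?thesis .
qed

lemma whiskerL_vcomp:
  assumes h: "h \<in> hom1 K B C"
    and f: "f \<in> hom1 K A B" "f' \<in> hom1 K A B" "f'' \<in> hom1 K A B"
    and \<alpha>: "\<alpha> \<in> hom2 K f f'" and \<beta>: "\<beta> \<in> hom2 K f' f''"
  shows "whiskerL K h (vcomp K \<beta> \<alpha>) = vcomp K (whiskerL K h \<beta>) (whiskerL K h \<alpha>)"
proof -
  have i: "id2 K h \<in> hom2 K h h" using h by (rule id2_hom1)
  have "whiskerL K h (vcomp K \<beta> \<alpha>) = hcomp K (vcomp K (id2 K h) (id2 K h)) (vcomp K \<beta> \<alpha>)"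
    unfolding whiskerL_def using vcomp_id_left[OF i] by simp
  also have "\<dots> = vcomp K (whiskerL K h \<beta>) (whiskerL K h \<alpha>)"
    unfolding whiskerL_def by (rule interchange[OF f h h h \<alpha> \<beta> i i])
  finally show ?thesis .
qed

lemma whiskerR_id2: "f \<in> hom1 K A B \<Longrightarrow> g \<in> hom1 K B C \<Longrightarrow> whiskerR K (id2 K g) f = id2 K (comp1 K g f)"
  unfolding whiskerR_def by (rule hcomp_id2)

lemma whiskerL_id2: "h \<in> hom1 K B C \<Longrightarrow> f \<in> hom1 K A B \<Longrightarrow> whiskerL K h (id2 K f) = id2 K (comp1 K h f)"
  unfolding whiskerL_def by (rule hcomp_id2)

lemma invertible2E:
  assumes "invertible2 K \<alpha>" "\<alpha> \<in> hom2 K a b"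
  obtains \<alpha>' where "\<alpha>' \<in> hom2 K b a" "vcomp K \<alpha>' \<alpha> = id2 K a" "vcomp K \<alpha> \<alpha>' = id2 K b"
  using assms unfolding invertible2_def hom2_def by auto

lemma invertible2I:
  assumes "\<alpha> \<in> hom2 K a b" "\<alpha>' \<in> hom2 K b a" "vcomp K \<alpha>' \<alpha> = id2 K a" "vcomp K \<alpha> \<alpha>' = id2 K b"
  shows "invertible2 K \<alpha>"
  using assms unfolding invertible2_def hom2_def by auto

lemma invertible2_vcomp:
  assumes \<alpha>: "\<alpha> \<in> hom2 K a b" and \<beta>: "\<beta> \<in> hom2 K b c"
    and "invertible2 K \<alpha>" "invertible2 K \<beta>"
  shows "invertible2 K (vcomp K \<beta> \<alpha>)"
proof -
  obtain \<alpha>' where \<alpha>': "\<alpha>' \<in> hom2 K b a" "vcomp K \<alpha>' \<alpha> = id2 K a" "vcomp K \<alpha> \<alpha>' = id2 K b"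
    using invertible2E \<open>invertible2 K \<alpha>\<close> \<alpha> by blast
  obtain \<beta>' where \<beta>': "\<beta>' \<in> hom2 K c b" "vcomp K \<beta>' \<beta> = id2 K b" "vcomp K \<beta> \<beta>' = id2 K c"
    using invertible2E \<open>invertible2 K \<beta>\<close> \<beta> by blast
  have \<beta>\<alpha>: "vcomp K \<beta> \<alpha> \<in> hom2 K a c" by (rule vcomp_hom[OF \<alpha> \<beta>])
  have \<alpha>'\<beta>': "vcomp K \<alpha>' \<beta>' \<in> hom2 K c a" by (rule vcomp_hom[OF \<beta>'(1) \<alpha>'(1)])
  have "vcomp K (vcomp K \<alpha>' \<beta>') (vcomp K \<beta> \<alpha>) = vcomp K \<alpha>' (vcomp K (vcomp K \<beta>' \<beta>) \<alpha>)"
    using vcomp_assoc[OF \<beta>\<alpha> \<beta>'(1) \<alpha>'(1)] vcomp_assoc[OF \<alpha> \<beta> \<beta>'(1)] by simp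
  also have "\<dots> = id2 K a" using \<beta>'(2) vcomp_id_left[OF \<alpha>] \<alpha>'(2) by simp
  finally have left: "vcomp K (vcomp K \<alpha>' \<beta>') (vcomp K \<beta> \<alpha>) = id2 K a" .
  have "vcomp K (vcomp K \<beta> \<alpha>) (vcomp K \<alpha>' \<beta>') = vcomp K \<beta> (vcomp K (vcomp K \<alpha> \<alpha>') \<beta>')"
    using vcomp_assoc[OF \<alpha>'\<beta>' \<alpha> \<beta>] vcomp_assoc[OF \<beta>'(1) \<alpha>'(1) \<alpha>] by simp
  also have "\<dots> = id2 K c" using \<alpha>'(3) vcomp_id_left[OF \<beta>'(1)] \<beta>'(3) by simp
  finally have right: "vcomp K (vcomp K \<beta> \<alpha>) (vcomp K \<alpha>' \<beta>') = id2 K c" .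
  show ?thesis by (rule invertible2I[OF \<beta>\<alpha> \<alpha>'\<beta>' left right])
qed

lemma invertible2_vcomp_cancel_left:
  assumes \<alpha>: "\<alpha> \<in> hom2 K a b" and \<beta>: "\<beta> \<in> hom2 K b c"
    and "invertible2 K \<beta>" "invertible2 K (vcomp K \<beta> \<alpha>)"
  shows "invertible2 K \<alpha>"
proof -
  obtain \<beta>' where \<beta>': "\<beta>' \<in> hom2 K c b" "vcomp K \<beta>' \<beta> = id2 K b" "vcomp K \<beta> \<beta>' = id2 K c"
    using invertible2E \<open>invertible2 K \<beta>\<close> \<beta> by blast
  have "invertible2 K \<beta>'" by (rule invertible2I[OF \<beta>'(1) \<beta> \<beta>'(3,2)])
  have "\<alpha> = vcomp K \<beta>' (vcomp K \<beta> \<alpha>)"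
    using vcomp_assoc[OF \<alpha> \<beta> \<beta>'(1)] \<beta>'(2) vcomp_id_left[OF \<alpha>] by simp
  also have "invertible2 K \<dots>"
    by (rule invertible2_vcomp[OF vcomp_hom[OF \<alpha> \<beta>] \<beta>'(1)]) fact+
  finally show ?thesis .
qed

lemma invertible2_whiskerR:
  assumes f: "f \<in> hom1 K A B" and g: "g \<in> hom1 K B C" "g' \<in> hom1 K B C"
    and \<alpha>: "\<alpha> \<in> hom2 K g g'" "invertible2 K \<alpha>"
  shows "invertible2 K (whiskerR K \<alpha> f)"
proof -
  obtain \<alpha>' where \<alpha>': "\<alpha>' \<in> hom2 K g' g" "vcomp K \<alpha>' \<alpha> = id2 K g" "vcomp K \<alpha> \<alpha>' = id2 K g'"
    using invertible2E \<alpha>(2,1) by blast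
  show ?thesis
    using whiskerR_vcomp[OF f g g(1) \<alpha>(1) \<alpha>'(1)] whiskerR_vcomp[OF f g(2,1,2) \<alpha>'(1) \<alpha>(1)]
      \<alpha>' whiskerR_id2[OF f g(1)] whiskerR_id2[OF f g(2)]
    by (intro invertible2I[OF whiskerR_hom[OF f g \<alpha>(1)] whiskerR_hom[OF f g(2,1) \<alpha>'(1)]]) simp_all
qed

lemma invertible2_whiskerL:
  assumes h: "h \<in> hom1 K B C" and f: "f \<in> hom1 K A B" "f' \<in> hom1 K A B"
    and \<alpha>: "\<alpha> \<in> hom2 K f f'" "invertible2 K \<alpha>"
  shows "invertible2 K (whiskerL K h \<alpha>)"
proof -
  obtain \<alpha>' where \<alpha>': "\<alpha>' \<in> hom2 K f' f" "vcomp K \<alpha>' \<alpha> = id2 K f" "vcomp K \<alpha> \<alpha>' = id2 K f'"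
    using invertible2E \<alpha>(2,1) by blast
  show ?thesis
    using whiskerL_vcomp[OF h f f(1) \<alpha>(1) \<alpha>'(1)] whiskerL_vcomp[OF h f(2,1,2) \<alpha>'(1) \<alpha>(1)]
      \<alpha>' whiskerL_id2[OF h f(1)] whiskerL_id2[OF h f(2)]
    by (intro invertible2I[OF whiskerL_hom[OF h f \<alpha>(1)] whiskerL_hom[OF h f(2,1) \<alpha>'(1)]]) simp_all
qed

lemma is_ranD:
  assumes "is_ran K f x r \<epsilon>"
  shows "f \<in> hom1 K (dom1 K f) (cod1 K f)" "x \<in> hom1 K (dom1 K f) (cod1 K x)"
    "r \<in> hom1 K (cod1 K f) (cod1 K x)" "\<epsilon> \<in> hom2 K (comp1 K r f) x"
  using assms by (auto simp: is_ran_def hom1_def)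

lemma is_ran_universal:
  assumes "is_ran K f x r \<epsilon>" "s \<in> hom1 K (cod1 K f) (cod1 K x)" "\<alpha> \<in> hom2 K (comp1 K s f) x"
  shows "\<exists>!\<beta>. \<beta> \<in> hom2 K s r \<and> vcomp K \<epsilon> (whiskerR K \<beta> f) = \<alpha>"
proof -
  have "\<forall>s \<in> hom1 K (cod1 K f) (cod1 K x). \<forall>\<alpha> \<in> hom2 K (comp1 K s f) x.
      \<exists>!\<beta>. \<beta> \<in> hom2 K s r \<and> vcomp K \<epsilon> (whiskerR K \<beta> f) = \<alpha>"
    using assms(1) unfolding is_ran_def by (elim conjE)
  then show ?thesis using assms(2,3) by blast
qed

lemma is_ran_factor:
  assumes "is_ran K f x r \<epsilon>" "s \<in> hom1 K (cod1 K f) (cod1 K x)" "\<alpha> \<in> hom2 K (comp1 K s f) x"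
  obtains \<beta> where "\<beta> \<in> hom2 K s r" "vcomp K \<epsilon> (whiskerR K \<beta> f) = \<alpha>"
  using ex1_implies_ex[OF is_ran_universal[OF assms]] that by blast

lemma is_ran_factor_unique:
  assumes R: "is_ran K f x r \<epsilon>" and s: "s \<in> hom1 K (cod1 K f) (cod1 K x)"
    and \<beta>: "\<beta> \<in> hom2 K s r" "\<beta>' \<in> hom2 K s r"
    and eq: "vcomp K \<epsilon> (whiskerR K \<beta> f) = vcomp K \<epsilon> (whiskerR K \<beta>' f)"
  shows "\<beta> = \<beta>'"
proof -
  have "vcomp K \<epsilon> (whiskerR K \<beta> f) \<in> hom2 K (comp1 K s f) x"
    using vcomp_hom[OF whiskerR_hom[OF is_ranD(1)[OF R] s is_ranD(3)[OF R] \<beta>(1)] is_ranD(4)[OF R]] .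
  from is_ran_universal[OF R s this] show ?thesis
    using \<beta> eq by (elim ex1E) metis
qed

lemma is_ran_vcomp_invertible:
  assumes R: "is_ran K f x r \<epsilon>" and s: "s \<in> hom1 K (cod1 K f) (cod1 K x)"
    and \<theta>: "\<theta> \<in> hom2 K s r" "invertible2 K \<theta>"
  shows "is_ran K f x s (vcomp K \<epsilon> (whiskerR K \<theta> f))"
proof -
  note f = is_ranD(1)[OF R] and r = is_ranD(3)[OF R] and \<epsilon> = is_ranD(4)[OF R]
  obtain \<theta>' where \<theta>': "\<theta>' \<in> hom2 K r s" "vcomp K \<theta>' \<theta> = id2 K s" "vcomp K \<theta> \<theta>' = id2 K r"
    using invertible2E \<theta>(2,1) by blast
  have \<theta>f: "whiskerR K \<theta> f \<in> hom2 K (comp1 K s f) (comp1 K r f)" by (rule whiskerR_hom[OF f s r \<theta>(1)])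
  have \<epsilon>\<theta>f: "vcomp K \<epsilon> (whiskerR K \<theta> f) \<in> hom2 K (comp1 K s f) x" by (rule vcomp_hom[OF \<theta>f \<epsilon>])
  have factor: "vcomp K (vcomp K \<epsilon> (whiskerR K \<theta> f)) (whiskerR K \<beta> f) = vcomp K \<epsilon> (whiskerR K (vcomp K \<theta> \<beta>) f)"
    if t: "t \<in> hom1 K (cod1 K f) (cod1 K x)" and \<beta>: "\<beta> \<in> hom2 K t s" for t \<beta>
    using vcomp_assoc[OF whiskerR_hom[OF f t s \<beta>] \<theta>f \<epsilon>] whiskerR_vcomp[OF f t s r \<beta> \<theta>(1)] by simp
  have cancel: "vcomp K \<theta>' (vcomp K \<theta> \<beta>) = \<beta>" if "\<beta> \<in> hom2 K t s" for t \<beta>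
    using vcomp_assoc[OF that \<theta>(1) \<theta>'(1)] \<theta>'(2) vcomp_id_left[OF that] by simp
  have "\<exists>!\<beta>. \<beta> \<in> hom2 K t s \<and> vcomp K (vcomp K \<epsilon> (whiskerR K \<theta> f)) (whiskerR K \<beta> f) = \<alpha>"
    if t: "t \<in> hom1 K (cod1 K f) (cod1 K x)" and \<alpha>: "\<alpha> \<in> hom2 K (comp1 K t f) x" for t \<alpha>
  proof -
    obtain \<beta>\<^sub>0 where \<beta>\<^sub>0: "\<beta>\<^sub>0 \<in> hom2 K t r" "vcomp K \<epsilon> (whiskerR K \<beta>\<^sub>0 f) = \<alpha>"
      using is_ran_factor[OF R t \<alpha>] .
    show ?thesis
    proof (rule ex1I[of _ "vcomp K \<theta>' \<beta>\<^sub>0"])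
      have "vcomp K \<theta> (vcomp K \<theta>' \<beta>\<^sub>0) = \<beta>\<^sub>0"
        using vcomp_assoc[OF \<beta>\<^sub>0(1) \<theta>'(1) \<theta>(1)] \<theta>'(3) vcomp_id_left[OF \<beta>\<^sub>0(1)] by simp
      with vcomp_hom[OF \<beta>\<^sub>0(1) \<theta>'(1)] factor[OF t] \<beta>\<^sub>0(2)
      show "vcomp K \<theta>' \<beta>\<^sub>0 \<in> hom2 K t s \<and>
          vcomp K (vcomp K \<epsilon> (whiskerR K \<theta> f)) (whiskerR K (vcomp K \<theta>' \<beta>\<^sub>0) f) = \<alpha>"
        by simp
    next
      fix \<beta> assume \<beta>: "\<beta> \<in> hom2 K t s \<and> vcomp K (vcomp K \<epsilon> (whiskerR K \<theta> f)) (whiskerR K \<beta> f) = \<alpha>"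
      then have "vcomp K \<theta> \<beta> = \<beta>\<^sub>0"
        using factor[OF t] \<beta>\<^sub>0 by (intro is_ran_factor_unique[OF R t vcomp_hom[OF _ \<theta>(1)]]) auto
      then show "\<beta> = vcomp K \<theta>' \<beta>\<^sub>0" using cancel[of \<beta> t] \<beta> by simp
    qed
  qed
  then show ?thesis using R s \<epsilon>\<theta>f by (auto simp: is_ran_def)
qed

lemma is_ran_endo_eq_id2:
  assumes R: "is_ran K f x r \<epsilon>" and \<phi>: "\<phi> \<in> hom2 K r r" and eq: "vcomp K \<epsilon> (whiskerR K \<phi> f) = \<epsilon>"
  shows "\<phi> = id2 K r"
proof (rule is_ran_factor_unique[OF R is_ranD(3)[OF R] \<phi>])
  show "id2 K r \<in> hom2 K r r" by (rule id2_hom1[OF is_ranD(3)[OF R]])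
  show "vcomp K \<epsilon> (whiskerR K \<phi> f) = vcomp K \<epsilon> (whiskerR K (id2 K r) f)"
    using eq whiskerR_id2[OF is_ranD(1,3)[OF R]] vcomp_id_right[OF is_ranD(4)[OF R]] by simp
qed

lemma is_ran_unique:
  assumes R: "is_ran K f x r \<epsilon>" and R': "is_ran K f x r' \<epsilon>'"
  obtains \<theta> where "\<theta> \<in> hom2 K r r'" "invertible2 K \<theta>" "vcomp K \<epsilon>' (whiskerR K \<theta> f) = \<epsilon>"
proof -
  note f = is_ranD(1)[OF R] and r = is_ranD(3)[OF R] and \<epsilon> = is_ranD(4)[OF R]
    and r' = is_ranD(3)[OF R'] and \<epsilon>' = is_ranD(4)[OF R']
  obtain \<theta> where \<theta>: "\<theta> \<in> hom2 K r r'" "vcomp K \<epsilon>' (whiskerR K \<theta> f) = \<epsilon>"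
    using is_ran_factor[OF R' r \<epsilon>] .
  obtain \<theta>' where \<theta>': "\<theta>' \<in> hom2 K r' r" "vcomp K \<epsilon> (whiskerR K \<theta>' f) = \<epsilon>'"
    using is_ran_factor[OF R r' \<epsilon>'] .
  have \<theta>f: "whiskerR K \<theta> f \<in> hom2 K (comp1 K r f) (comp1 K r' f)" by (rule whiskerR_hom[OF f r r' \<theta>(1)])
  have \<theta>'f: "whiskerR K \<theta>' f \<in> hom2 K (comp1 K r' f) (comp1 K r f)" by (rule whiskerR_hom[OF f r' r \<theta>'(1)])
  have "vcomp K \<epsilon> (whiskerR K (vcomp K \<theta>' \<theta>) f) = vcomp K (vcomp K \<epsilon> (whiskerR K \<theta>' f)) (whiskerR K \<theta> f)"
    using whiskerR_vcomp[OF f r r' r \<theta>(1) \<theta>'(1)] vcomp_assoc[OF \<theta>f \<theta>'f \<epsilon>] by simp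
  also have "\<dots> = \<epsilon>" using \<theta>(2) \<theta>'(2) by simp
  finally have left: "vcomp K \<theta>' \<theta> = id2 K r"
    by (rule is_ran_endo_eq_id2[OF R vcomp_hom[OF \<theta>(1) \<theta>'(1)]])
  have "vcomp K \<epsilon>' (whiskerR K (vcomp K \<theta> \<theta>') f) = vcomp K (vcomp K \<epsilon>' (whiskerR K \<theta> f)) (whiskerR K \<theta>' f)"
    using whiskerR_vcomp[OF f r' r r' \<theta>'(1) \<theta>(1)] vcomp_assoc[OF \<theta>'f \<theta>f \<epsilon>'] by simp
  also have "\<dots> = \<epsilon>'" using \<theta>(2) \<theta>'(2) by simp
  finally have right: "vcomp K \<theta> \<theta>' = id2 K r'"
    by (rule is_ran_endo_eq_id2[OF R' vcomp_hom[OF \<theta>'(1) \<theta>(1)]])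
  show thesis by (rule that[OF \<theta>(1) invertible2I[OF \<theta>(1) \<theta>'(1) left right] \<theta>(2)])
qed

lemma right_Kan_injective_ran_counit_invertible:
  assumes "right_Kan_injective K X f" and R: "is_ran K f x r \<epsilon>" and "cod1 K x = X"
  shows "invertible2 K \<epsilon>"
proof -
  obtain r' \<epsilon>' where R': "is_ran K f x r' \<epsilon>'" and "invertible2 K \<epsilon>'"
    using assms is_ranD(2)[OF R] unfolding right_Kan_injective_def by blast
  obtain \<theta> where \<theta>: "\<theta> \<in> hom2 K r r'" "invertible2 K \<theta>" "vcomp K \<epsilon>' (whiskerR K \<theta> f) = \<epsilon>"
    using is_ran_unique[OF R R'] .
  have "invertible2 K (vcomp K \<epsilon>' (whiskerR K \<theta> f))"
    using is_ranD[OF R] is_ranD[OF R'] \<theta>(1,2) \<open>invertible2 K \<epsilon>'\<close>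
    by (intro invertible2_vcomp[OF whiskerR_hom] invertible2_whiskerR)
  with \<theta>(3) show ?thesis by simp
qed

lemma preserves_ran_if_counit_invertible:
  assumes f: "corep_surj K f" and Y: "right_Kan_injective K Y f" and g: "g \<in> hom1 K X Y"
    and R: "is_ran K f x r \<epsilon>" "cod1 K x = X" and \<epsilon>: "invertible2 K \<epsilon>"
  shows "preserves_ran K g f x r \<epsilon>"
proof -
  note f1 = is_ranD(1)[OF R(1)]
  have x: "x \<in> hom1 K (dom1 K f) X" and r: "r \<in> hom1 K (cod1 K f) X"
    and \<epsilon>_hom: "\<epsilon> \<in> hom2 K (comp1 K r f) x"
    using is_ranD[OF R(1)] R(2) by simp_all
  have gx: "comp1 K g x \<in> hom1 K (dom1 K f) Y" by (rule comp1_hom[OF x g])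
  then have cod_gx: "cod1 K (comp1 K g x) = Y" by (simp add: hom1_def)
  obtain s \<delta> where S: "is_ran K f (comp1 K g x) s \<delta>" and \<delta>: "invertible2 K \<delta>"
    using Y gx unfolding right_Kan_injective_def by blast
  have s: "s \<in> hom1 K (cod1 K f) Y" and \<delta>_hom: "\<delta> \<in> hom2 K (comp1 K s f) (comp1 K g x)"
    using is_ranD[OF S] cod_gx by simp_all
  have gr: "comp1 K g r \<in> hom1 K (cod1 K f) Y" by (rule comp1_hom[OF r g])
  have g\<epsilon>: "whiskerL K g \<epsilon> \<in> hom2 K (comp1 K (comp1 K g r) f) (comp1 K g x)"
    using whiskerL_hom[OF g comp1_hom[OF f1 r] x \<epsilon>_hom] comp1_assoc[OF f1 r g] by simp
  obtain \<beta> where \<beta>: "\<beta> \<in> hom2 K (comp1 K g r) s" "vcomp K \<delta> (whiskerR K \<beta> f) = whiskerL K g \<epsilon>"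
    using is_ran_factor[OF S] gr g\<epsilon> cod_gx by metis
  have \<beta>f: "whiskerR K \<beta> f \<in> hom2 K (comp1 K (comp1 K g r) f) (comp1 K s f)"
    by (rule whiskerR_hom[OF f1 gr s \<beta>(1)])
  have "invertible2 K (whiskerL K g \<epsilon>)"
    by (rule invertible2_whiskerL[OF g comp1_hom[OF f1 r] x \<epsilon>_hom \<epsilon>])
  then have "invertible2 K (whiskerR K \<beta> f)"
    using invertible2_vcomp_cancel_left[OF \<beta>f \<delta>_hom \<delta>] \<beta>(2) by simp
  moreover have "Y \<in> obj K" using arr_obj g unfolding hom1_def by blast
  ultimately have "invertible2 K \<beta>"
    using f gr s \<beta>(1) unfolding corep_surj_def by blast
  from is_ran_vcomp_invertible[OF S _ \<beta>(1) this] show ?thesis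
    unfolding preserves_ran_def \<beta>(2) using gr cod_gx by simp
qed

lemma RInj_arr_if_RInj_obj:
  assumes H: "\<forall>f \<in> H. corep_surj K f"
    and X: "RInj_obj K H X" and Y: "RInj_obj K H Y" and g: "g \<in> hom1 K X Y"
  shows "RInj_arr K H g"
  unfolding RInj_arr_def
proof (intro conjI allI impI ballI)
  show "g \<in> arr K" using g by (simp add: hom1_def)
  fix f x r \<epsilon> assume "f \<in> H" and R: "is_ran K f x r \<epsilon> \<and> cod1 K x = dom1 K g"
  then have "cod1 K x = X" using g by (simp add: hom1_def)
  with \<open>f \<in> H\<close> R X Y H g show "preserves_ran K g f x r \<epsilon>"
    unfolding RInj_obj_def
    by (blast intro: preserves_ran_if_counit_invertible right_Kan_injective_ran_counit_invertible)
qed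

end


definition co :: "('o, 'a, 'c, 'z) two_cat_scheme \<Rightarrow> ('o, 'a, 'c) two_cat" where
  "co K = \<lparr>obj = obj K, arr = arr K, dom1 = dom1 K, cod1 = cod1 K, id1 = id1 K,
     comp1 = comp1 K, cell = cell K, src2 = tgt2 K, tgt2 = src2 K, id2 = id2 K,
     vcomp = (\<lambda>\<beta> \<alpha>. vcomp K \<alpha> \<beta>), hcomp = hcomp K\<rparr>"

lemma co_simps [simp]:
  "obj (co K) = obj K" "arr (co K) = arr K" "dom1 (co K) = dom1 K" "cod1 (co K) = cod1 K"
  "id1 (co K) = id1 K" "comp1 (co K) = comp1 K" "cell (co K) = cell K"
  "src2 (co K) = tgt2 K" "tgt2 (co K) = src2 K" "id2 (co K) = id2 K"
  "vcomp (co K) \<beta> \<alpha> = vcomp K \<alpha> \<beta>" "hcomp (co K) = hcomp K"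
  by (simp_all add: co_def)

lemma hom1_co [simp]: "hom1 (co K) = hom1 K"
  by (simp add: hom1_def fun_eq_iff)

lemma hom2_co [simp]: "hom2 (co K) f g = hom2 K g f"
  by (auto simp add: hom2_def)

lemma whiskerR_co [simp]: "whiskerR (co K) = whiskerR K"
  by (simp add: whiskerR_def fun_eq_iff)

lemma whiskerL_co [simp]: "whiskerL (co K) = whiskerL K"
  by (simp add: whiskerL_def fun_eq_iff)

lemma invertible2_co [simp]: "invertible2 (co K) \<alpha> = invertible2 K \<alpha>"
  unfolding invertible2_def by auto

lemma is_ran_co [simp]: "is_ran (co K) f x r \<epsilon> = is_lan K f x r \<epsilon>"
  unfolding is_ran_def is_lan_def by simp

lemma RInj_obj_co [simp]: "RInj_obj (co K) H X = LInj_obj K H X"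
  unfolding RInj_obj_def LInj_obj_def right_Kan_injective_def left_Kan_injective_def by simp

lemma RInj_arr_co [simp]: "RInj_arr (co K) H h = LInj_arr K H h"
  unfolding RInj_arr_def LInj_arr_def preserves_ran_def preserves_lan_def by simp

lemma corep_surj_co [simp]: "corep_surj (co K) f = corep_surj K f"
  unfolding corep_surj_def by auto

lemma two_category_co:
  assumes "two_category K"
  shows "two_category (co K)"
proof -
  interpret two_category K by fact
  show ?thesis
    by unfold_locales
      (simp_all add: arr_obj id1_hom comp1_hom comp1_assoc comp1_id_left comp1_id_right
        cell_arr id2_hom vcomp_hom vcomp_assoc vcomp_id_left vcomp_id_right hcomp_hom
        hcomp_assoc hcomp_id2 hcomp_unit_left hcomp_unit_right interchange, blast dest: cell_arr)
qed

theorem proposition2p3p3: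
  fixes K :: "('o, 'a, 'c, 'z) two_cat_scheme" and H :: "'a set"
  assumes "two_category K"
    and "H \<subseteq> arr K"
    and "\<forall>f \<in> H. corep_surj K f"
  shows "(\<forall>X Y g. RInj_obj K H X \<and> RInj_obj K H Y \<and> g \<in> hom1 K X Y \<longrightarrow> RInj_arr K H g)
       \<and> (\<forall>X Y g. LInj_obj K H X \<and> LInj_obj K H Y \<and> g \<in> hom1 K X Y \<longrightarrow> LInj_arr K H g)"
proof (intro conjI allI impI; elim conjE)
  fix X Y g assume "RInj_obj K H X" "RInj_obj K H Y" "g \<in> hom1 K X Y"
  with assms(1,3) show "RInj_arr K H g"
    by (rule two_category.RInj_arr_if_RInj_obj)
next
  fix X Y g assume "LInj_obj K H X" "LInj_obj K H Y" "g \<in> hom1 K X Y"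
  then have "RInj_arr (co K) H g"
    using two_category_co[OF assms(1)] assms(3) by (intro two_category.RInj_arr_if_RInj_obj) simp_all
  then show "LInj_arr K H g" by simp
qed

end
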